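(* Let $G=(V,E)$ be a graph and $v\in V$. Suppose that $G$ is $\mathcal{R}_d$-closed, $\deg_G(v)=k\geq d+1$, and $G$ contains no $K_{d+2}$ as a subgraph. Then $$\mathrm{rc}^*_d(G,v)\geq d+1-\frac{1}{k+1}\binom{d+2}{2}.$$
   Context: $r_d$ is the rank function of the $d$-dimensional generic rigidity matroid $\mathcal{R}_d$ (linear independence of rows of the rigidity matrix of a generic $d$-dimensional framework); $r_d(H)$ is the rank of $E(H)$. $G$ is $\mathcal{R}_d$-closed if $r_d(G+uv)=r_d(G)+1$ for every non-adjacent pair $u,v$. Let $\pi$ be a uniformly random ordering of $V$, $T_v^\pi$ the set of vertices preceding $v$ in $\pi$, $E_v$ the set of edges incident with $v$, and $E_v^\pi=\{vu\in E_v:u\in T_v^\pi\}$. Define $\mathrm{rc}^*_d(G,v,\pi)=r_d(G-E_v+E_v^\pi)-r_d(G-v)$ and $\mathrm{rc}^*_d(G,v)=\mathbb{E}(\mathrm{rc}^*_d(G,v,\pi))$. *)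

theory Defs
  imports Complex_Main "HOL-Combinatorics.Multiset_Permutations"
begin

definition graph :: "'a set \<Rightarrow> 'a set set \<Rightarrow> bool" where
  "graph V E \<longleftrightarrow> finite V \<and> (\<forall>e\<in>E. \<exists>u v. e = {u, v} \<and> u \<noteq> v \<and> u \<in> V \<and> v \<in> V)"

text \<open>Row of the d-dimensional rigidity matrix of framework p for edge e = {u,v}:
  entry at (w,i) is p w i - p x i where x is the other endpoint, for w in e and i < d.\<close>

definition rig_row :: "nat \<Rightarrow> ('a \<Rightarrow> nat \<Rightarrow> real) \<Rightarrow> 'a set \<Rightarrow> ('a \<times> nat \<Rightarrow> real)" where
  "rig_row d p e = (\<lambda>(w, i). if w \<in> e \<and> i < d then (\<Sum>x\<in>e. p w i - p x i) else 0)"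

definition rows_indep :: "nat \<Rightarrow> ('a \<Rightarrow> nat \<Rightarrow> real) \<Rightarrow> 'a set set \<Rightarrow> bool" where
  "rows_indep d p S \<longleftrightarrow>
     (\<forall>c. (\<lambda>z. \<Sum>e\<in>S. c e * rig_row d p e z) = (\<lambda>z. 0) \<longrightarrow> (\<forall>e\<in>S. c e = 0))"

definition rig_rank :: "nat \<Rightarrow> ('a \<Rightarrow> nat \<Rightarrow> real) \<Rightarrow> 'a set set \<Rightarrow> nat" where
  "rig_rank d p F = Max {card S | S. S \<subseteq> F \<and> rows_indep d p S}"

text \<open>Generic rigidity matroid rank r_d(F): rank of the rigidity matrix at a generic
  realization, which equals the maximum rank over all realizations p.\<close>

definition r_d :: "nat \<Rightarrow> 'a set set \<Rightarrow> nat" where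
  "r_d d F = Max {rig_rank d p F | p. True}"

definition R_closed :: "nat \<Rightarrow> 'a set \<Rightarrow> 'a set set \<Rightarrow> bool" where
  "R_closed d V E \<longleftrightarrow>
     (\<forall>u\<in>V. \<forall>v\<in>V. u \<noteq> v \<and> {u, v} \<notin> E \<longrightarrow> r_d d (insert {u, v} E) = r_d d E + 1)"

definition degree :: "'a set set \<Rightarrow> 'a \<Rightarrow> nat" where
  "degree E v = card {u. {u, v} \<in> E}"

definition contains_clique :: "'a set \<Rightarrow> 'a set set \<Rightarrow> nat \<Rightarrow> bool" where
  "contains_clique V E n \<longleftrightarrow>
     (\<exists>S\<subseteq>V. card S = n \<and> (\<forall>u\<in>S. \<forall>w\<in>S. u \<noteq> w \<longrightarrow> {u, w} \<in> E))"

definition precedes :: "'a list \<Rightarrow> 'a \<Rightarrow> 'a \<Rightarrow> bool" where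
  "precedes \<pi> u v \<longleftrightarrow> (\<exists>i j. i < j \<and> j < length \<pi> \<and> \<pi> ! i = u \<and> \<pi> ! j = v)"

definition edges_at :: "'a set set \<Rightarrow> 'a \<Rightarrow> 'a set set" where
  "edges_at E v = {e \<in> E. v \<in> e}"

definition edges_at_before :: "'a set set \<Rightarrow> 'a \<Rightarrow> 'a list \<Rightarrow> 'a set set" where
  "edges_at_before E v \<pi> = {e \<in> E. \<exists>u. e = {v, u} \<and> precedes \<pi> u v}"

definition rc_star_pi :: "nat \<Rightarrow> 'a set set \<Rightarrow> 'a \<Rightarrow> 'a list \<Rightarrow> int" where
  "rc_star_pi d E v \<pi> =
     int (r_d d ((E - edges_at E v) \<union> edges_at_before E v \<pi>)) - int (r_d d (E - edges_at E v))"

definition rc_star :: "nat \<Rightarrow> 'a set \<Rightarrow> 'a set set \<Rightarrow> 'a \<Rightarrow> real" where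
  "rc_star d V E v =
     (\<Sum>\<pi>\<in>permutations_of_set V. real_of_int (rc_star_pi d E v \<pi>)) / real (card (permutations_of_set V))"

end

(*
  For an ordering \<pi>, let N be the set of neighbours of v that precede v.  If |N| \<le> d, placing v
  generically adds |N| independent rows (0-extension).  Otherwise choose d + 1 vertices of N;
  since G has no K_{d+2}, two of them, a and b, are non-adjacent, and R_d-closedness makes the
  row of ab independent of the rows of G.  Placing v at the midpoint of a and b then adds d + 1
  independent rows (1-extension).  Hence rc*_d(G,v,\<pi>) \<ge> min(|N|, d + 1).  In a uniformly
  random ordering, the position of v among its closed neighbourhood is uniform on {0..k}, so the
  expectation is at least (1/(k+1)) \<Sum>_{j\<le>k} min(j, d + 1) = d + 1 - C(d+2,2)/(k+1).

  Genericity is expressed by sets of realizations that contain all but finitely many points of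
  every line through any of their points.  Two nonempty such sets meet, and independence of
  finitely many rows is such a condition, because along a line it is the non-vanishing of a
  Gram determinant, a polynomial in the line parameter.
*)

theory Submission
  imports Defs "Jordan_Normal_Form.Determinant"
begin

hide_const (open) Polynomial.degree

section \<open>Linear independence of families of functions\<close>

definition lin_indep :: "('i \<Rightarrow> 'z \<Rightarrow> real) \<Rightarrow> 'i set \<Rightarrow> bool" where
  "lin_indep f S \<longleftrightarrow> (\<forall>c. (\<lambda>z. \<Sum>e\<in>S. c e * f e z) = (\<lambda>z. 0) \<longrightarrow> (\<forall>e\<in>S. c e = 0))"

definition in_lin_span :: "('i \<Rightarrow> 'z \<Rightarrow> real) \<Rightarrow> 'i set \<Rightarrow> ('z \<Rightarrow> real) \<Rightarrow> bool" where
  "in_lin_span f T x \<longleftrightarrow> (\<exists>\<beta>. x = (\<lambda>z. \<Sum>e\<in>T. \<beta> e * f e z))"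

lemma lin_indepD:
  assumes "lin_indep f S" and "(\<lambda>z. \<Sum>e\<in>S. c e * f e z) = (\<lambda>z. 0)" and "e \<in> S"
  shows "c e = 0"
  using assms unfolding lin_indep_def by blast

lemma lin_indep_cong:
  assumes "\<And>e. e \<in> S \<Longrightarrow> f e = g e"
  shows "lin_indep f S \<longleftrightarrow> lin_indep g S"
proof -
  have "(\<lambda>z. \<Sum>e\<in>S. c e * f e z) = (\<lambda>z. \<Sum>e\<in>S. c e * g e z)" for c
    using assms by (intro ext sum.cong) auto
  then show ?thesis unfolding lin_indep_def by simp
qed

lemma lin_indep_reindex:
  assumes h: "bij_betw h A S"
  shows "lin_indep (\<lambda>i. f (h i)) A \<longleftrightarrow> lin_indep f S"
proof -
  have sum_S: "(\<Sum>e\<in>S. g e) = (\<Sum>i\<in>A. g (h i))" for g :: "_ \<Rightarrow> real"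
    by (rule sum.reindex_bij_betw[OF h, symmetric])
  show ?thesis
  proof
    assume indep: "lin_indep (\<lambda>i. f (h i)) A"
    show "lin_indep f S" unfolding lin_indep_def
    proof (intro allI impI ballI)
      fix c e assume comb: "(\<lambda>z. \<Sum>e\<in>S. c e * f e z) = (\<lambda>z. 0)" and "e \<in> S"
      then obtain i where "i \<in> A" and "e = h i" using h by (auto simp: bij_betw_def)
      have comb_A: "(\<lambda>z. \<Sum>i\<in>A. c (h i) * f (h i) z) = (\<lambda>z. 0)" using comb by (simp add: sum_S)
      show "c e = 0" using lin_indepD[OF indep comb_A \<open>i \<in> A\<close>] \<open>e = h i\<close> by simp
    qed
  next
    assume indep: "lin_indep f S"
    show "lin_indep (\<lambda>i. f (h i)) A" unfolding lin_indep_def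
    proof (intro allI impI ballI)
      fix c i assume comb: "(\<lambda>z. \<Sum>i\<in>A. c i * f (h i) z) = (\<lambda>z. 0)" and "i \<in> A"
      define c' where "c' = c \<circ> inv_into A h"
      have c'h: "c' (h j) = c j" if "j \<in> A" for j
        using that h by (simp add: c'_def bij_betw_def)
      have "(\<lambda>z. \<Sum>e\<in>S. c' e * f e z) = (\<lambda>z. 0)"
        using comb by (simp add: sum_S c'h)
      then have "c' (h i) = 0"
        using indep \<open>i \<in> A\<close> h unfolding lin_indep_def by (auto simp: bij_betw_def)
      then show "c i = 0" using c'h[OF \<open>i \<in> A\<close>] by simp
    qed
  qed
qed

lemma lin_indep_subset:
  assumes "finite T" and "S \<subseteq> T" and "lin_indep f T"
  shows "lin_indep f S"
  unfolding lin_indep_def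
proof (intro allI impI ballI)
  fix c e assume comb: "(\<lambda>z. \<Sum>e\<in>S. c e * f e z) = (\<lambda>z. 0)" and "e \<in> S"
  define c' where "c' e = (if e \<in> S then c e else 0)" for e
  have "(\<Sum>e\<in>T. c' e * f e z) = (\<Sum>e\<in>S. c e * f e z)" for z
  proof -
    have "(\<Sum>e\<in>T. c' e * f e z) = (\<Sum>e\<in>S. c' e * f e z)"
      using assms(1,2) by (intro sum.mono_neutral_right) (auto simp: c'_def)
    also have "\<dots> = (\<Sum>e\<in>S. c e * f e z)"
      by (intro sum.cong) (auto simp: c'_def)
    finally show ?thesis .
  qed
  then have "(\<lambda>z. \<Sum>e\<in>T. c' e * f e z) = (\<lambda>z. 0)" using comb by simp
  then have "c' e = 0" using assms(2,3) \<open>e \<in> S\<close> unfolding lin_indep_def by blast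
  then show "c e = 0" using \<open>e \<in> S\<close> by (simp add: c'_def)
qed

lemma in_lin_span_base:
  assumes "finite T" and "e \<in> T"
  shows "in_lin_span f T (f e)"
  unfolding in_lin_span_def
proof (intro exI ext)
  fix z
  have "(\<Sum>e'\<in>T. (if e' = e then 1 else 0) * f e' z) = (\<Sum>e'\<in>T. if e' = e then f e' z else 0)"
    by (intro sum.cong) auto
  then show "f e z = (\<Sum>e'\<in>T. (if e' = e then 1 else 0) * f e' z)"
    using assms by simp
qed

lemma in_lin_span_trans:
  assumes "finite S" and "\<forall>e\<in>S. in_lin_span f T (f e)" and "in_lin_span f S x"
  shows "in_lin_span f T x"
proof -
  obtain B where B: "\<forall>e\<in>S. f e = (\<lambda>z. \<Sum>e'\<in>T. B e e' * f e' z)"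
    using assms(2) unfolding in_lin_span_def by metis
  obtain \<alpha> where \<alpha>: "x = (\<lambda>z. \<Sum>e\<in>S. \<alpha> e * f e z)"
    using assms(3) unfolding in_lin_span_def by blast
  have "x z = (\<Sum>e'\<in>T. (\<Sum>e\<in>S. \<alpha> e * B e e') * f e' z)" for z
  proof -
    have "x z = (\<Sum>e\<in>S. \<Sum>e'\<in>T. \<alpha> e * B e e' * f e' z)"
      unfolding \<alpha> using B by (simp add: sum_distrib_left mult.assoc)
    also have "\<dots> = (\<Sum>e'\<in>T. (\<Sum>e\<in>S. \<alpha> e * B e e') * f e' z)"
      by (subst sum.swap) (simp add: sum_distrib_right)
    finally show ?thesis .
  qed
  then have "x = (\<lambda>z. \<Sum>e'\<in>T. (\<Sum>e\<in>S. \<alpha> e * B e e') * f e' z)"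
    by (rule ext)
  then show ?thesis unfolding in_lin_span_def by (rule exI[of _ "\<lambda>e'. \<Sum>e\<in>S. \<alpha> e * B e e'"])
qed

lemma in_lin_span_mono:
  assumes "finite T" and "finite T'" and "T \<subseteq> T'" and "in_lin_span f T x"
  shows "in_lin_span f T' x"
  using in_lin_span_trans[OF assms(1) _ assms(4)] in_lin_span_base[OF assms(2)] assms(3) by blast

lemma in_lin_span_if_not_lin_indep_insert:
  assumes "finite T" and "e \<notin> T" and "lin_indep f T" and "\<not> lin_indep f (insert e T)"
  shows "in_lin_span f T (f e)"
proof -
  obtain c where comb: "(\<lambda>z. \<Sum>e'\<in>insert e T. c e' * f e' z) = (\<lambda>z. 0)"
    and nz: "\<exists>e'\<in>insert e T. c e' \<noteq> 0"
    using assms(4) unfolding lin_indep_def by blast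
  have comb': "c e * f e z + (\<Sum>e'\<in>T. c e' * f e' z) = 0" for z
    using fun_cong[OF comb, of z] assms(1,2) by simp
  have "c e \<noteq> 0"
  proof
    assume "c e = 0"
    then have "(\<lambda>z. \<Sum>e'\<in>T. c e' * f e' z) = (\<lambda>z. 0)" using comb' by auto
    then show False using assms(3) nz \<open>c e = 0\<close> unfolding lin_indep_def by auto
  qed
  have "f e z = (\<Sum>e'\<in>T. (- c e' / c e) * f e' z)" for z
  proof -
    have "f e z = - (\<Sum>e'\<in>T. c e' * f e' z) / c e"
      using comb'[of z] \<open>c e \<noteq> 0\<close> by (simp add: field_simps)
    also have "\<dots> = (\<Sum>e'\<in>T. (- c e' / c e) * f e' z)"
      by (simp add: sum_divide_distrib flip: sum_negf)
    finally show ?thesis .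
  qed
  then have "f e = (\<lambda>z. \<Sum>e'\<in>T. (- c e' / c e) * f e' z)"
    by (rule ext)
  then show ?thesis unfolding in_lin_span_def by (rule exI[of _ "\<lambda>e'. - c e' / c e"])
qed

lemma not_lin_indep_insert_if_in_lin_span:
  assumes "finite T" and "e \<notin> T" and "in_lin_span f T (f e)"
  shows "\<not> lin_indep f (insert e T)"
proof
  assume indep: "lin_indep f (insert e T)"
  obtain \<beta> where \<beta>: "f e = (\<lambda>z. \<Sum>e'\<in>T. \<beta> e' * f e' z)"
    using assms(3) unfolding in_lin_span_def by blast
  have "(\<lambda>z. \<Sum>e'\<in>insert e T. (\<beta>(e := -1)) e' * f e' z) = (\<lambda>z. 0)"
  proof
    fix z
    have "(\<Sum>e'\<in>T. (\<beta>(e := -1)) e' * f e' z) = f e z"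
      using assms(2) \<beta> by (auto intro!: sum.cong)
    then show "(\<Sum>e'\<in>insert e T. (\<beta>(e := -1)) e' * f e' z) = 0"
      using assms(1,2) by simp
  qed
  then have "\<forall>e'\<in>insert e T. (\<beta>(e := -1)) e' = 0"
    using indep unfolding lin_indep_def by blast
  then show False by simp
qed

lemma coeff_eq_0_if_not_in_lin_span:
  assumes "finite S" and "finite T" and "S \<subseteq> T" and "\<not> in_lin_span f T x"
    and comb: "\<And>z. (\<Sum>e\<in>S. c e * f e z) + \<mu> * x z = 0"
  shows "\<mu> = 0"
proof (rule ccontr)
  assume "\<mu> \<noteq> 0"
  have "x z = (\<Sum>e\<in>S. (- c e / \<mu>) * f e z)" for z
  proof -
    have "x z = - (\<Sum>e\<in>S. c e * f e z) / \<mu>"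
      using comb[of z] \<open>\<mu> \<noteq> 0\<close> by (simp add: field_simps)
    also have "\<dots> = (\<Sum>e\<in>S. (- c e / \<mu>) * f e z)"
      by (simp add: sum_divide_distrib flip: sum_negf)
    finally show ?thesis .
  qed
  then have "x = (\<lambda>z. \<Sum>e\<in>S. (- c e / \<mu>) * f e z)" by (rule ext)
  then have "in_lin_span f S x" unfolding in_lin_span_def by (rule exI[of _ "\<lambda>e. - c e / \<mu>"])
  then have "in_lin_span f T x" by (rule in_lin_span_mono[OF assms(1-3)])
  with assms(4) show False ..
qed

definition gram_mat :: "nat \<Rightarrow> 'z set \<Rightarrow> (nat \<Rightarrow> 'z \<Rightarrow> real) \<Rightarrow> real mat" where
  "gram_mat n Z v = mat n n (\<lambda>(i, j). \<Sum>z\<in>Z. v i z * v j z)"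

lemma gram_mat_mult_vec_eq_0_iff:
  assumes "finite Z" and "c \<in> carrier_vec n"
  shows "gram_mat n Z v *\<^sub>v c = 0\<^sub>v n \<longleftrightarrow> (\<forall>z\<in>Z. (\<Sum>j=0..<n. c $ j * v j z) = 0)"
proof -
  define w where "w z = (\<Sum>j=0..<n. c $ j * v j z)" for z
  have entry: "(gram_mat n Z v *\<^sub>v c) $ i = (\<Sum>z\<in>Z. v i z * w z)" if "i < n" for i
  proof -
    have "(gram_mat n Z v *\<^sub>v c) $ i = (\<Sum>j=0..<n. (\<Sum>z\<in>Z. v i z * v j z) * c $ j)"
      using that assms(2) by (simp add: gram_mat_def scalar_prod_def)
    also have "\<dots> = (\<Sum>z\<in>Z. v i z * w z)"
      unfolding w_def sum_distrib_left sum_distrib_right by (subst sum.swap) (simp add: mult_ac)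
    finally show ?thesis .
  qed
  have "gram_mat n Z v *\<^sub>v c = 0\<^sub>v n \<longleftrightarrow> (\<forall>z\<in>Z. w z = 0)"
  proof
    assume "gram_mat n Z v *\<^sub>v c = 0\<^sub>v n"
    then have orth: "(\<Sum>z\<in>Z. v i z * w z) = 0" if "i < n" for i
      using entry[OF that] that by (metis index_zero_vec(1))
    have "(\<Sum>z\<in>Z. w z * w z) = (\<Sum>z\<in>Z. \<Sum>j=0..<n. c $ j * v j z * w z)"
      by (simp add: w_def sum_distrib_right)
    also have "\<dots> = (\<Sum>j=0..<n. \<Sum>z\<in>Z. c $ j * v j z * w z)"
      by (rule sum.swap)
    also have "\<dots> = (\<Sum>j=0..<n. c $ j * (\<Sum>z\<in>Z. v j z * w z))"
      by (simp add: sum_distrib_left mult_ac)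
    also have "\<dots> = 0" using orth by simp
    finally have "\<forall>z\<in>Z. w z * w z = 0"
      using sum_nonneg_eq_0_iff[OF assms(1), of "\<lambda>z. w z * w z"] by simp
    then show "\<forall>z\<in>Z. w z = 0" by simp
  next
    assume w0: "\<forall>z\<in>Z. w z = 0"
    show "gram_mat n Z v *\<^sub>v c = 0\<^sub>v n"
    proof (rule eq_vecI)
      fix i assume "i < dim_vec (0\<^sub>v n :: real vec)"
      then have "i < n" by simp
      have "(gram_mat n Z v *\<^sub>v c) $ i = 0"
        unfolding entry[OF \<open>i < n\<close>] using w0 by simp
      then show "(gram_mat n Z v *\<^sub>v c) $ i = 0\<^sub>v n $ i" using \<open>i < n\<close> by simp
    qed (simp add: gram_mat_def)
  qed
  then show ?thesis by (simp add: w_def)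
qed

lemma lin_indep_iff_det_gram_mat:
  assumes "finite Z" and "\<And>i z. i < n \<Longrightarrow> z \<notin> Z \<Longrightarrow> v i z = 0"
  shows "lin_indep v {0..<n} \<longleftrightarrow> det (gram_mat n Z v) \<noteq> 0"
proof -
  have M: "gram_mat n Z v \<in> carrier_mat n n" by (simp add: gram_mat_def)
  have kernel: "gram_mat n Z v *\<^sub>v vec n \<gamma> = 0\<^sub>v n \<longleftrightarrow> (\<lambda>z. \<Sum>i=0..<n. \<gamma> i * v i z) = (\<lambda>z. 0)"
    for \<gamma>
  proof -
    have vec_sum: "(\<Sum>j=0..<n. vec n \<gamma> $ j * v j z) = (\<Sum>j=0..<n. \<gamma> j * v j z)" for z
      by (rule sum.cong) auto
    have outside: "(\<Sum>j=0..<n. \<gamma> j * v j z) = 0" if "z \<notin> Z" for z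
      using assms(2) that by (intro sum.neutral) auto
    show ?thesis
      using gram_mat_mult_vec_eq_0_iff[OF assms(1) vec_carrier] outside
      by (auto simp: vec_sum fun_eq_iff)
  qed
  show ?thesis
  proof
    assume indep: "lin_indep v {0..<n}"
    show "det (gram_mat n Z v) \<noteq> 0"
    proof
      assume "det (gram_mat n Z v) = 0"
      then obtain c where c: "c \<in> carrier_vec n" "c \<noteq> 0\<^sub>v n" "gram_mat n Z v *\<^sub>v c = 0\<^sub>v n"
        using det_0_iff_vec_prod_zero[OF M] by blast
      have "c = vec n (\<lambda>i. c $ i)" using c(1) by auto
      then have "(\<lambda>z. \<Sum>i=0..<n. c $ i * v i z) = (\<lambda>z. 0)" using kernel c(3) by metis
      then have "c $ i = 0" if "i < n" for i using lin_indepD[OF indep] that by simp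
      then have "c = 0\<^sub>v n" using c(1) by (intro eq_vecI) auto
      with c(2) show False ..
    qed
  next
    assume det: "det (gram_mat n Z v) \<noteq> 0"
    show "lin_indep v {0..<n}" unfolding lin_indep_def
    proof (intro allI impI ballI)
      fix \<gamma> i assume "(\<lambda>z. \<Sum>i=0..<n. \<gamma> i * v i z) = (\<lambda>z. 0)" and i: "i \<in> {0..<n}"
      then have "gram_mat n Z v *\<^sub>v vec n \<gamma> = 0\<^sub>v n" using kernel by simp
      then have "vec n \<gamma> = 0\<^sub>v n" using det det_0_iff_vec_prod_zero[OF M] vec_carrier by blast
      then have "vec n \<gamma> $ i = 0\<^sub>v n $ i" by simp
      then show "\<gamma> i = 0" using i by simp
    qed
  qed
qed

text \<open>Along the line, the Gram determinant of the family is a polynomial in t that does not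
  vanish at t = 0.\<close>

lemma finite_not_lin_indep_on_line:
  assumes "finite S" and "finite Z"
    and "\<And>e z. e \<in> S \<Longrightarrow> z \<notin> Z \<Longrightarrow> a e z = 0"
    and "\<And>e z. e \<in> S \<Longrightarrow> z \<notin> Z \<Longrightarrow> b e z = 0"
    and "lin_indep a S"
  shows "finite {t. \<not> lin_indep (\<lambda>e z. a e z + t * b e z) S}"
proof -
  define n where "n = card S"
  obtain h where h: "bij_betw h {0..<n} S"
    using ex_bij_betw_nat_finite[OF assms(1)] unfolding n_def by blast
  define P where "P = det (mat n n (\<lambda>(i, j).
    \<Sum>z\<in>Z. [:a (h i) z, b (h i) z:] * [:a (h j) z, b (h j) z:]))"
  have indep_iff: "lin_indep (\<lambda>e z. a e z + t * b e z) S \<longleftrightarrow> poly P t \<noteq> 0" for t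
  proof -
    interpret eval: comm_ring_hom "\<lambda>q. poly q t" by unfold_locales auto
    have "poly P t = det (gram_mat n Z (\<lambda>i z. a (h i) z + t * b (h i) z))"
      unfolding P_def gram_mat_def eval.hom_det[symmetric]
      by (intro arg_cong[where f = det] eq_matI) (auto simp: poly_sum algebra_simps)
    also have "\<dots> \<noteq> 0 \<longleftrightarrow> lin_indep (\<lambda>i z. a (h i) z + t * b (h i) z) {0..<n}"
      using h assms(3,4) by (intro lin_indep_iff_det_gram_mat[symmetric] assms(2))
        (auto simp: bij_betw_def)
    also have "\<dots> \<longleftrightarrow> lin_indep (\<lambda>e z. a e z + t * b e z) S"
      by (rule lin_indep_reindex[OF h])
    finally show ?thesis by simp
  qed
  have "P \<noteq> 0" using indep_iff[of 0] assms(5) by auto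
  then have "finite {t. poly P t = 0}" by (rule poly_roots_finite)
  then show ?thesis using indep_iff by simp
qed

section \<open>Genericity along lines\<close>

definition line_point ::
    "('a \<Rightarrow> nat \<Rightarrow> real) \<Rightarrow> ('a \<Rightarrow> nat \<Rightarrow> real) \<Rightarrow> real \<Rightarrow> 'a \<Rightarrow> nat \<Rightarrow> real" where
  "line_point p q t = (\<lambda>x i. p x i + t * (q x i - p x i))"

text \<open>These sets play the role of the Zariski-open sets of realizations.\<close>

definition cofinite_on_lines :: "('a \<Rightarrow> nat \<Rightarrow> real) set \<Rightarrow> bool" where
  "cofinite_on_lines P \<longleftrightarrow> (\<forall>p\<in>P. \<forall>q. finite {t. line_point p q t \<notin> P})"

lemma cofinite_on_lines_Int:
  assumes "cofinite_on_lines A" and "cofinite_on_lines B"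
  shows "cofinite_on_lines (A \<inter> B)"
proof -
  have "{t. line_point p q t \<notin> A \<inter> B} = {t. line_point p q t \<notin> A} \<union> {t. line_point p q t \<notin> B}"
    for p q by auto
  then show ?thesis using assms unfolding cofinite_on_lines_def by auto
qed

lemma cofinite_on_lines_Union:
  assumes "\<And>A. A \<in> \<A> \<Longrightarrow> cofinite_on_lines A"
  shows "cofinite_on_lines (\<Union>\<A>)"
  unfolding cofinite_on_lines_def
proof (intro ballI allI)
  fix p q assume "p \<in> \<Union>\<A>"
  then obtain A where "A \<in> \<A>" and "p \<in> A" by blast
  then have "finite {t. line_point p q t \<notin> A}"
    using assms unfolding cofinite_on_lines_def by blast
  moreover have "{t. line_point p q t \<notin> \<Union>\<A>} \<subseteq> {t. line_point p q t \<notin> A}"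
    using \<open>A \<in> \<A>\<close> by blast
  ultimately show "finite {t. line_point p q t \<notin> \<Union>\<A>}" by (rule finite_subset[rotated])
qed

lemma cofinite_on_lines_Int_nonempty:
  assumes "cofinite_on_lines A" and "cofinite_on_lines B" and "A \<noteq> {}" and "B \<noteq> {}"
  shows "A \<inter> B \<noteq> {}"
proof -
  obtain p q where "p \<in> A" and "q \<in> B" using assms(3,4) by blast
  have "line_point p q t = line_point q p (1 - t)" for t
    unfolding line_point_def by (auto simp: algebra_simps fun_eq_iff)
  then have "{t. line_point p q t \<notin> B} = (\<lambda>t. 1 - t) -` {s. line_point q p s \<notin> B}"
    by auto
  moreover have "finite ((\<lambda>t::real. 1 - t) -` {s. line_point q p s \<notin> B})"
    using assms(2) \<open>q \<in> B\<close> unfolding cofinite_on_lines_def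
    by (intro finite_vimageI) (auto simp: inj_on_def)
  ultimately have "finite {t. line_point p q t \<notin> B}" by (simp only:)
  moreover have "finite {t. line_point p q t \<notin> A}"
    using assms(1) \<open>p \<in> A\<close> unfolding cofinite_on_lines_def by blast
  ultimately obtain t where "t \<notin> {t. line_point p q t \<notin> A} \<union> {t. line_point p q t \<notin> B}"
    using ex_new_if_finite[OF infinite_UNIV_char_0] by (metis finite_Un)
  then show ?thesis by blast
qed

lemma cofinite_on_lines_lin_indep:
  fixes F :: "('a \<Rightarrow> nat \<Rightarrow> real) \<Rightarrow> 'i \<Rightarrow> 'z \<Rightarrow> real"
  assumes "finite S" and "finite Z"
    and "\<And>p e z. e \<in> S \<Longrightarrow> z \<notin> Z \<Longrightarrow> F p e z = 0"
    and "\<And>p q t e z. F (line_point p q t) e z = F p e z + t * (F q e z - F p e z)"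
  shows "cofinite_on_lines {p. lin_indep (F p) S}"
  unfolding cofinite_on_lines_def
proof (intro ballI allI)
  fix p q assume "p \<in> {p. lin_indep (F p) S}"
  then have "finite {t. \<not> lin_indep (\<lambda>e z. F p e z + t * (F q e z - F p e z)) S}"
    using assms(3) by (intro finite_not_lin_indep_on_line[OF assms(1,2)]) auto
  moreover have "F (line_point p q t) = (\<lambda>e z. F p e z + t * (F q e z - F p e z))" for t
    by (intro ext) (rule assms(4))
  ultimately show "finite {t. line_point p q t \<notin> {p. lin_indep (F p) S}}" by simp
qed

section \<open>Rows of the rigidity matrix\<close>

lemma rows_indep_iff_lin_indep: "rows_indep d p S \<longleftrightarrow> lin_indep (rig_row d p) S"
  by (simp add: rows_indep_def lin_indep_def)

lemma rig_row_notin: "w \<notin> e \<Longrightarrow> rig_row d p e (w, i) = 0"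
  by (simp add: rig_row_def)

lemma rig_row_doubleton:
  assumes "x \<noteq> y"
  shows "rig_row d p {x, y} (w, i) =
    (if i < d then (if w = x then p x i - p y i else if w = y then p y i - p x i else 0) else 0)"
  using assms by (auto simp: rig_row_def)

lemma rig_row_fun_upd: "v \<notin> e \<Longrightarrow> rig_row d (p(v := f)) e = rig_row d p e"
  unfolding rig_row_def by (rule ext) (auto intro!: sum.cong)

lemma rows_indep_fun_upd:
  assumes "\<forall>e\<in>S. v \<notin> e"
  shows "rows_indep d (p(v := f)) S \<longleftrightarrow> rows_indep d p S"
  unfolding rows_indep_iff_lin_indep using assms
  by (intro lin_indep_cong) (simp add: rig_row_fun_upd)

lemma rig_row_line_point:
  "rig_row d (line_point p q t) e z = rig_row d p e z + t * (rig_row d q e z - rig_row d p e z)"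
  by (cases z)
    (auto simp: rig_row_def line_point_def sum_subtractf sum.distrib sum_distrib_left algebra_simps)

lemma cofinite_on_lines_rows_indep:
  assumes "finite S" and "\<forall>e\<in>S. finite e"
  shows "cofinite_on_lines {p. rows_indep d p S}"
proof -
  have "cofinite_on_lines {p. lin_indep (rig_row d p) S}"
  proof (rule cofinite_on_lines_lin_indep[OF assms(1), of "(\<Union>S) \<times> {..<d}"])
    show "finite ((\<Union>S) \<times> {..<d})" using assms by auto
  next
    fix p e z assume "e \<in> S" and "z \<notin> (\<Union>S) \<times> {..<d}"
    then show "rig_row d p e z = 0" by (cases z) (auto simp: rig_row_def)
  qed (rule rig_row_line_point)
  then show ?thesis by (simp add: rows_indep_iff_lin_indep)
qed

lemma finite_indep_cards: "finite F \<Longrightarrow> finite {card S | S. S \<subseteq> F \<and> rows_indep d p S}"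
  by (rule finite_subset[of _ "card ` Pow F"]) auto

lemma card_le_rig_rank:
  assumes "finite F" and "S \<subseteq> F" and "rows_indep d p S"
  shows "card S \<le> rig_rank d p F"
  unfolding rig_rank_def using assms finite_indep_cards by (intro Max_ge) auto

lemma ex_rig_rank_basis:
  assumes "finite F"
  shows "\<exists>S\<subseteq>F. rows_indep d p S \<and> card S = rig_rank d p F"
proof -
  have "rows_indep d p {}" by (simp add: rows_indep_def)
  then have "rig_rank d p F \<in> {card S | S. S \<subseteq> F \<and> rows_indep d p S}"
    unfolding rig_rank_def using finite_indep_cards[OF assms] by (intro Max_in) auto
  then show ?thesis by auto
qed

lemma rig_rank_le_card: "finite F \<Longrightarrow> rig_rank d p F \<le> card F"
  using ex_rig_rank_basis card_mono by metis

lemma finite_rig_ranks: "finite F \<Longrightarrow> finite {rig_rank d p F | p. True}"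
  by (rule finite_subset[of _ "{..card F}"]) (auto simp: rig_rank_le_card)

lemma rig_rank_le_r_d: "finite F \<Longrightarrow> rig_rank d p F \<le> r_d d F"
  unfolding r_d_def using finite_rig_ranks by (intro Max_ge) auto

lemma ex_rig_rank_eq_r_d: "finite F \<Longrightarrow> \<exists>p. rig_rank d p F = r_d d F"
proof -
  assume "finite F"
  then have "r_d d F \<in> {rig_rank d p F | p. True}"
    unfolding r_d_def using finite_rig_ranks by (intro Max_in) auto
  then show ?thesis by auto
qed

lemma card_le_r_d:
  assumes "finite F" and "S \<subseteq> F" and "rows_indep d p S"
  shows "card S \<le> r_d d F"
  using card_le_rig_rank[OF assms] rig_rank_le_r_d[OF assms(1)] by (rule order.trans)

lemma r_d_mono:
  assumes "finite F'" and "F \<subseteq> F'"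
  shows "r_d d F \<le> r_d d F'"
proof -
  have "finite F" using assms finite_subset by blast
  obtain p where p: "rig_rank d p F = r_d d F" using ex_rig_rank_eq_r_d[OF \<open>finite F\<close>] by blast
  obtain S where S: "S \<subseteq> F" "rows_indep d p S" "card S = rig_rank d p F"
    using ex_rig_rank_basis[OF \<open>finite F\<close>] by blast
  have "card S \<le> r_d d F'" using S assms by (intro card_le_r_d) auto
  then show ?thesis using p S(3) by simp
qed

lemma in_lin_span_rig_rank_basis:
  assumes "finite F" and "T \<subseteq> F" and "rows_indep d p T" and "card T = rig_rank d p F"
    and "f \<in> F"
  shows "in_lin_span (rig_row d p) T (rig_row d p f)"
proof -
  have "finite T" using assms(1,2) finite_subset by blast
  show ?thesis
  proof (cases "f \<in> T")
    case True
    then show ?thesis using \<open>finite T\<close> by (intro in_lin_span_base)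
  next
    case False
    have "\<not> rows_indep d p (insert f T)"
    proof
      assume "rows_indep d p (insert f T)"
      then have "card (insert f T) \<le> rig_rank d p F"
        using assms(1,2,5) by (intro card_le_rig_rank) auto
      then show False using False \<open>finite T\<close> assms(4) by simp
    qed
    then show ?thesis
      using in_lin_span_if_not_lin_indep_insert[OF \<open>finite T\<close> False] assms(3)
      by (simp add: rows_indep_iff_lin_indep)
  qed
qed

lemma rig_rank_Suc_not_in_span:
  assumes "finite F" and "rig_rank d p (insert e F) = Suc (rig_rank d p F)"
  shows "\<not> in_lin_span (rig_row d p) F (rig_row d p e)"
proof
  assume span: "in_lin_span (rig_row d p) F (rig_row d p e)"
  obtain T where T: "T \<subseteq> insert e F" "rows_indep d p T" "card T = rig_rank d p (insert e F)"
    using ex_rig_rank_basis[of "insert e F"] assms(1) by blast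
  have "finite T" using T(1) assms(1) finite_subset by blast
  have "e \<in> T"
  proof (rule ccontr)
    assume "e \<notin> T"
    then have "card T \<le> rig_rank d p F" using T(1,2) assms(1) by (intro card_le_rig_rank) auto
    then show False using T(3) assms(2) by simp
  qed
  define T' where "T' = T - {e}"
  have T': "T' \<subseteq> F" "finite T'" "e \<notin> T'" "T = insert e T'" "card T' = rig_rank d p F"
    using T \<open>e \<in> T\<close> \<open>finite T\<close> assms(2) by (auto simp: T'_def)
  have "rows_indep d p T'"
    using T(2) T'(4) \<open>finite T\<close> lin_indep_subset[of T T' "rig_row d p"]
    by (auto simp: rows_indep_iff_lin_indep)
  then have "in_lin_span (rig_row d p) T' (rig_row d p f)" if "f \<in> F" for f
    using in_lin_span_rig_rank_basis[OF assms(1) T'(1) _ T'(5) that] by blast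
  then have "in_lin_span (rig_row d p) T' (rig_row d p e)"
    using in_lin_span_trans[OF assms(1) _ span] by blast
  then have "\<not> lin_indep (rig_row d p) T"
    using not_lin_indep_insert_if_in_lin_span[OF T'(2,3)] T'(4) by simp
  then show False using T(2) by (simp add: rows_indep_iff_lin_indep)
qed

definition generic_realizations :: "nat \<Rightarrow> 'a set set \<Rightarrow> ('a \<Rightarrow> nat \<Rightarrow> real) set" where
  "generic_realizations d F = {p. rig_rank d p F = r_d d F}"

lemma generic_realizations_nonempty: "finite F \<Longrightarrow> generic_realizations d F \<noteq> {}"
  using ex_rig_rank_eq_r_d by (auto simp: generic_realizations_def)

lemma cofinite_on_lines_generic_realizations:
  assumes "finite F" and "\<forall>e\<in>F. finite e"
  shows "cofinite_on_lines (generic_realizations d F)"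
proof -
  have "generic_realizations d F = \<Union>{{p. rows_indep d p S} | S. S \<subseteq> F \<and> card S = r_d d F}"
  proof (intro equalityI subsetI)
    fix p assume "p \<in> generic_realizations d F"
    then show "p \<in> \<Union>{{p. rows_indep d p S} | S. S \<subseteq> F \<and> card S = r_d d F}"
      using ex_rig_rank_basis[OF assms(1), of d p] by (auto simp: generic_realizations_def)
  next
    fix p assume "p \<in> \<Union>{{p. rows_indep d p S} | S. S \<subseteq> F \<and> card S = r_d d F}"
    then obtain S where "S \<subseteq> F" "card S = r_d d F" "rows_indep d p S" by blast
    then have "r_d d F \<le> rig_rank d p F" using assms(1) card_le_rig_rank by metis
    then show "p \<in> generic_realizations d F"
      using rig_rank_le_r_d[OF assms(1)] by (simp add: generic_realizations_def eq_iff)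
  qed
  moreover have "cofinite_on_lines {p. rows_indep d p S}" if "S \<subseteq> F" for S
    using that assms by (intro cofinite_on_lines_rows_indep) (auto intro: finite_subset)
  ultimately show ?thesis by (auto intro!: cofinite_on_lines_Union)
qed

definition displacement :: "nat \<Rightarrow> ('a \<Rightarrow> nat \<Rightarrow> real) \<Rightarrow> 'a \<Rightarrow> 'a \<Rightarrow> nat \<Rightarrow> real" where
  "displacement d p v u = (\<lambda>i. if i < d then p v i - p u i else 0)"

lemma rig_row_at_endpoint: "v \<noteq> u \<Longrightarrow> rig_row d p {v, u} (v, i) = displacement d p v u i"
  by (simp add: rig_row_doubleton displacement_def)

lemma cofinite_on_lines_displacement:
  assumes "finite M"
  shows "cofinite_on_lines {p. lin_indep (displacement d p v) M}"
  by (rule cofinite_on_lines_lin_indep[OF assms, of "{..<d}"])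
    (auto simp: displacement_def line_point_def algebra_simps)

lemma ex_lin_indep_displacement:
  assumes "finite M" and "v \<notin> M" and "card M \<le> d"
  shows "\<exists>p. lin_indep (displacement d p v) M"
proof -
  obtain h where h: "bij_betw h {0..<card M} M"
    using ex_bij_betw_nat_finite[OF assms(1)] by blast
  define p where "p x i = (if i < card M \<and> h i = x then -1 else (0::real))" for x i
  have disp: "displacement d p v u k = (if h k = u then 1 else 0)" if "k < card M" for u k
  proof -
    have "h k \<noteq> v" using bij_betwE[OF h] that assms(2) by auto
    then show ?thesis using that assms(3) by (auto simp: displacement_def p_def)
  qed
  have "lin_indep (displacement d p v) M" unfolding lin_indep_def
  proof (intro allI impI ballI)
    fix c u assume comb: "(\<lambda>k. \<Sum>u\<in>M. c u * displacement d p v u k) = (\<lambda>k. 0)" and "u \<in> M"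
    then obtain k where k: "k < card M" "h k = u"
      using h by (force simp: bij_betw_def)
    have "0 = (\<Sum>u'\<in>M. c u' * displacement d p v u' k)" using fun_cong[OF comb, of k] by simp
    also have "\<dots> = (\<Sum>u'\<in>M. if u' = u then c u' else 0)"
      using disp[OF k(1)] k(2) by (intro sum.cong) auto
    also have "\<dots> = c u" using assms(1) \<open>u \<in> M\<close> by simp
    finally show "c u = 0" by simp
  qed
  then show ?thesis by blast
qed

section \<open>Adding a vertex: 0- and 1-extensions\<close>

definition star :: "'a \<Rightarrow> 'a set \<Rightarrow> 'a set set" where
  "star v N = (\<lambda>u. {v, u}) ` N"

lemma inj_on_star: "v \<notin> N \<Longrightarrow> inj_on (\<lambda>u. {v, u}) N"
  by (auto simp: inj_on_def doubleton_eq_iff)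

lemma sum_Un_star:
  assumes "finite S" and "finite N" and "v \<notin> N" and "\<forall>e\<in>S. v \<notin> e"
  shows "(\<Sum>e\<in>S \<union> star v N. g e) = (\<Sum>e\<in>S. g e) + (\<Sum>u\<in>N. g {v, u})"
proof -
  have "S \<inter> star v N = {}" using assms(4) by (auto simp: star_def)
  then show ?thesis
    using assms(1-3) by (simp add: sum.union_disjoint star_def sum.reindex inj_on_star)
qed

lemma card_Un_star:
  assumes "finite S" and "finite N" and "v \<notin> N" and "\<forall>e\<in>S. v \<notin> e"
  shows "card (S \<union> star v N) = card S + card N"
  using sum_Un_star[OF assms, of "\<lambda>_. 1::nat"] by simp

lemma rig_row_sum_Un_star_at_center:
  assumes "finite S" and "finite N" and "v \<notin> N" and "\<forall>e\<in>S. v \<notin> e"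
  shows "(\<Sum>e\<in>S \<union> star v N. c e * rig_row d p e (v, i))
    = (\<Sum>u\<in>N. c {v, u} * displacement d p v u i)"
proof -
  have "(\<Sum>u\<in>N. c {v, u} * rig_row d p {v, u} (v, i)) = (\<Sum>u\<in>N. c {v, u} * displacement d p v u i)"
  proof (intro sum.cong refl)
    fix u assume "u \<in> N"
    then have "v \<noteq> u" using assms(3) by auto
    then show "c {v, u} * rig_row d p {v, u} (v, i) = c {v, u} * displacement d p v u i"
      by (simp add: rig_row_at_endpoint)
  qed
  then show ?thesis using assms by (simp add: sum_Un_star rig_row_notin)
qed

lemma rows_indep_Un_starI:
  assumes "finite S" and "\<forall>e\<in>S. v \<notin> e" and "finite N" and "v \<notin> N" and "rows_indep d p S"
    and coeffs: "\<And>c. (\<lambda>z. \<Sum>e\<in>S \<union> star v N. c e * rig_row d p e z) = (\<lambda>z. 0) \<Longrightarrow>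
      \<forall>u\<in>N. c {v, u} = 0"
  shows "rows_indep d p (S \<union> star v N)"
  unfolding rows_indep_def
proof (intro allI impI ballI)
  fix c e assume comb: "(\<lambda>z. \<Sum>e\<in>S \<union> star v N. c e * rig_row d p e z) = (\<lambda>z. 0)"
    and e: "e \<in> S \<union> star v N"
  have star_coeffs: "\<forall>u\<in>N. c {v, u} = 0" using coeffs[OF comb] .
  then have "(\<Sum>u\<in>N. c {v, u} * rig_row d p {v, u} z) = 0" for z
    by (intro sum.neutral) simp
  then have S_comb: "(\<lambda>z. \<Sum>e\<in>S. c e * rig_row d p e z) = (\<lambda>z. 0)"
    using comb by (simp add: sum_Un_star[OF assms(1,3,4,2)])
  show "c e = 0"
  proof (cases "e \<in> S")
    case True
    then show ?thesis
      using lin_indepD[OF assms(5)[unfolded rows_indep_iff_lin_indep] S_comb] by simp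
  next
    case False
    then obtain u where "u \<in> N" and "e = {v, u}" using e by (auto simp: star_def)
    then show ?thesis using star_coeffs by simp
  qed
qed

lemma rows_indep_Un_star:
  assumes "finite S" and "\<forall>e\<in>S. v \<notin> e" and "finite N" and "v \<notin> N"
    and "rows_indep d p S" and "lin_indep (displacement d p v) N"
  shows "rows_indep d p (S \<union> star v N)"
proof (rule rows_indep_Un_starI[OF assms(1-5)])
  fix c assume comb: "(\<lambda>z. \<Sum>e\<in>S \<union> star v N. c e * rig_row d p e z) = (\<lambda>z. 0)"
  have disp_comb: "(\<lambda>i. \<Sum>u\<in>N. c {v, u} * displacement d p v u i) = (\<lambda>i. 0)"
  proof
    fix i
    show "(\<Sum>u\<in>N. c {v, u} * displacement d p v u i) = 0"
      using fun_cong[OF comb, of "(v, i)"] rig_row_sum_Un_star_at_center[OF assms(1,3,4,2)]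
      by simp
  qed
  show "\<forall>u\<in>N. c {v, u} = 0" using lin_indepD[OF assms(6) disp_comb] by blast
qed

lemma r_d_zero_extension:
  assumes "finite H" and "\<forall>e\<in>H. finite e \<and> v \<notin> e"
    and "finite N" and "v \<notin> N" and "card N \<le> d"
  shows "r_d d H + card N \<le> r_d d (H \<union> star v N)"
proof -
  have "generic_realizations d H \<inter> {p. lin_indep (displacement d p v) N} \<noteq> {}"
    using assms(1,2) ex_lin_indep_displacement[OF assms(3-5)]
    by (intro cofinite_on_lines_Int_nonempty cofinite_on_lines_generic_realizations
        cofinite_on_lines_displacement generic_realizations_nonempty assms(3)) auto
  then obtain p where p_H: "rig_rank d p H = r_d d H"
    and p_v: "lin_indep (displacement d p v) N"
    by (auto simp: generic_realizations_def)
  obtain S where S: "S \<subseteq> H" "rows_indep d p S" "card S = r_d d H"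
    using ex_rig_rank_basis[OF assms(1), of d p] p_H by auto
  have S': "finite S" "\<forall>e\<in>S. v \<notin> e" using S(1) assms(1,2) finite_subset by auto
  have "card (S \<union> star v N) \<le> r_d d (H \<union> star v N)"
    using S(1) assms(1,3) rows_indep_Un_star[OF S'(1,2) assms(3,4) S(2) p_v]
    by (intro card_le_r_d) (auto simp: star_def)
  then show ?thesis using card_Un_star[OF S'(1) assms(3,4) S'(2)] S(3) by simp
qed

lemma midpoint_combination_coeffs:
  assumes "finite N" and "a \<in> N" and "b \<in> N" and "a \<noteq> b"
    and indep: "lin_indep (displacement d p a) (N - {a})"
    and comb: "\<And>i. i < d \<Longrightarrow> (\<Sum>u\<in>N. l u * ((p a i + p b i) / 2 - p u i)) = 0"
  shows "l b = l a" and "\<And>u. u \<in> N \<Longrightarrow> u \<noteq> a \<Longrightarrow> u \<noteq> b \<Longrightarrow> l u = 0"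
proof -
  define L where "L = (\<Sum>u\<in>N. l u)"
  define \<mu> where "\<mu> u = l u - (if u = b then L / 2 else 0)" for u
  have b: "b \<in> N - {a}" using assms(3,4) by simp
  have "(\<lambda>i. \<Sum>u\<in>N - {a}. \<mu> u * displacement d p a u i) = (\<lambda>i. 0)"
  proof
    fix i
    show "(\<Sum>u\<in>N - {a}. \<mu> u * displacement d p a u i) = 0"
    proof (cases "i < d")
      case False
      then show ?thesis by (simp add: displacement_def)
    next
      case True
      have "(\<Sum>u\<in>N - {a}. \<mu> u * displacement d p a u i)
          = (\<Sum>u\<in>N - {a}. l u * (p a i - p u i) - (if u = b then L / 2 * (p a i - p b i) else 0))"
        using True by (intro sum.cong refl) (simp add: \<mu>_def displacement_def algebra_simps)
      also have "\<dots> = (\<Sum>u\<in>N - {a}. l u * (p a i - p u i)) - L / 2 * (p a i - p b i)"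
        using b assms(1) by (simp add: sum_subtractf)
      also have "\<dots> = (\<Sum>u\<in>N. l u * (p a i - p u i)) - L / 2 * (p a i - p b i)"
        using sum.remove[OF assms(1,2), of "\<lambda>u. l u * (p a i - p u i)"] by simp
      also have "\<dots> = (\<Sum>u\<in>N. l u * (p a i - p u i) - l u * (p a i - p b i) / 2)"
        by (simp add: L_def sum_subtractf sum_distrib_right sum_divide_distrib)
      also have "\<dots> = (\<Sum>u\<in>N. l u * ((p a i + p b i) / 2 - p u i))"
        by (intro sum.cong refl) (simp add: field_simps)
      also have "\<dots> = 0" using comb[OF True] .
      finally show ?thesis .
    qed
  qed
  then have \<mu>0: "\<mu> u = 0" if "u \<in> N - {a}" for u
    using lin_indepD[OF indep] that by blast
  show others: "l u = 0" if "u \<in> N" "u \<noteq> a" "u \<noteq> b" for u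
    using \<mu>0[of u] that by (simp add: \<mu>_def)
  have "L = (\<Sum>u\<in>N. (if u = a then l a else 0) + (if u = b then l b else 0))"
    unfolding L_def using others assms(4) by (intro sum.cong refl) auto
  also have "\<dots> = l a + l b" using assms(1-4) by (simp add: sum.distrib)
  finally show "l b = l a" using \<mu>0[OF b] by (simp add: \<mu>_def)
qed

lemma rig_row_midpoint_split:
  assumes "v \<noteq> a" and "v \<noteq> b" and "a \<noteq> b"
  shows "rig_row d (p(v := (\<lambda>i. (p a i + p b i) / 2))) {v, a} z
       + rig_row d (p(v := (\<lambda>i. (p a i + p b i) / 2))) {v, b} z = rig_row d p {a, b} z / 2"
  using assms by (cases z) (auto simp: rig_row_doubleton field_simps)

lemma sum_star_midpoint:
  assumes "finite N" and "v \<notin> N" and "a \<in> N" and "b \<in> N" and "a \<noteq> b"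
    and "c {v, b} = c {v, a}" and "\<And>u. u \<in> N \<Longrightarrow> u \<noteq> a \<Longrightarrow> u \<noteq> b \<Longrightarrow> c {v, u} = 0"
  shows "(\<Sum>u\<in>N. c {v, u} * rig_row d (p(v := (\<lambda>i. (p a i + p b i) / 2))) {v, u} z)
    = c {v, a} * (rig_row d p {a, b} z / 2)"
proof -
  let ?p' = "p(v := (\<lambda>i. (p a i + p b i) / 2))"
  have "(\<Sum>u\<in>N. c {v, u} * rig_row d ?p' {v, u} z)
      = (\<Sum>u\<in>N. (if u = a then c {v, a} * rig_row d ?p' {v, a} z else 0)
               + (if u = b then c {v, a} * rig_row d ?p' {v, b} z else 0))"
    using assms(5-7) by (intro sum.cong refl) auto
  also have "\<dots> = c {v, a} * (rig_row d ?p' {v, a} z + rig_row d ?p' {v, b} z)"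
    using assms(1,3,4) by (simp add: sum.distrib algebra_simps)
  also have "\<dots> = c {v, a} * (rig_row d p {a, b} z / 2)"
    using assms(2-5) rig_row_midpoint_split[of v a b d p z] by auto
  finally show ?thesis .
qed

text \<open>A dependency among the new rows at the midpoint forces equal coefficients on va and
  vb and zero elsewhere on the star, so it would express the row of ab through the rows of S.\<close>

lemma rows_indep_Un_star_midpoint:
  assumes S: "finite S" "\<forall>e\<in>S. v \<notin> e" "rows_indep d p S"
    and N: "finite N" "v \<notin> N" "a \<in> N" "b \<in> N" "a \<noteq> b"
    and indep_a: "lin_indep (displacement d p a) (N - {a})"
    and G: "finite G" "S \<subseteq> G"
    and not_span: "\<not> in_lin_span (rig_row d p) G (rig_row d p {a, b})"
  shows "rows_indep d (p(v := (\<lambda>i. (p a i + p b i) / 2))) (S \<union> star v N)"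
proof -
  define p' where "p' = p(v := (\<lambda>i. (p a i + p b i) / 2))"
  have "rows_indep d p' (S \<union> star v N)"
  proof (rule rows_indep_Un_starI[OF S(1,2) N(1,2)])
    show "rows_indep d p' S" using S(2,3) by (simp add: p'_def rows_indep_fun_upd)
  next
    fix c assume comb: "(\<lambda>z. \<Sum>e\<in>S \<union> star v N. c e * rig_row d p' e z) = (\<lambda>z. 0)"
    have center: "(\<Sum>u\<in>N. c {v, u} * ((p a i + p b i) / 2 - p u i)) = 0" if "i < d" for i
    proof -
      have "(\<Sum>u\<in>N. c {v, u} * ((p a i + p b i) / 2 - p u i))
          = (\<Sum>u\<in>N. c {v, u} * displacement d p' v u i)"
        using that N(2) by (intro sum.cong refl) (auto simp: displacement_def p'_def)
      also have "\<dots> = 0"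
        using fun_cong[OF comb, of "(v, i)"] rig_row_sum_Un_star_at_center[OF S(1) N(1,2) S(2)]
        by simp
      finally show ?thesis .
    qed
    note coeffs = midpoint_combination_coeffs[OF N(1,3-5) indep_a center]
    have S_rows: "(\<Sum>e\<in>S. c e * rig_row d p' e z) = (\<Sum>e\<in>S. c e * rig_row d p e z)" for z
      using S(2) by (intro sum.cong refl) (simp add: p'_def rig_row_fun_upd)
    have S_comb: "(\<Sum>e\<in>S. c e * rig_row d p e z) + c {v, a} * (rig_row d p {a, b} z / 2) = 0"
      for z
      using fun_cong[OF comb, of z] sum_star_midpoint[OF N coeffs, of d p z, folded p'_def]
      by (simp add: sum_Un_star[OF S(1) N(1,2) S(2)] S_rows)
    have "(\<Sum>e\<in>S. c e * rig_row d p e z) + c {v, a} / 2 * rig_row d p {a, b} z = 0" for z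
      using S_comb[of z] by simp
    then have "c {v, a} / 2 = 0"
      by (rule coeff_eq_0_if_not_in_lin_span[OF S(1) G not_span])
    then have "c {v, a} = 0" by simp
    show "\<forall>u\<in>N. c {v, u} = 0"
    proof
      fix u assume "u \<in> N"
      then show "c {v, u} = 0" using coeffs \<open>c {v, a} = 0\<close> by (cases "u = a \<or> u = b") auto
    qed
  qed
  then show ?thesis by (simp add: p'_def)
qed

lemma r_d_one_extension:
  assumes H: "finite H" "\<forall>e\<in>H. finite e \<and> v \<notin> e"
    and N: "finite N" "v \<notin> N" "card N = d + 1" "a \<in> N" "b \<in> N" "a \<noteq> b"
    and G: "finite G" "H \<subseteq> G" "\<forall>e\<in>G. finite e"
    and closed: "r_d d (insert {a, b} G) = r_d d G + 1"
  shows "r_d d H + (d + 1) \<le> r_d d (H \<union> star v N)"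
proof -
  have "finite (N - {a})" "a \<notin> N - {a}" "card (N - {a}) \<le> d" using N by auto
  then have "generic_realizations d H \<inter> generic_realizations d G
      \<inter> generic_realizations d (insert {a, b} G)
      \<inter> {p. lin_indep (displacement d p a) (N - {a})} \<noteq> {}"
    using H G ex_lin_indep_displacement[of "N - {a}" a d]
    by (intro cofinite_on_lines_Int_nonempty cofinite_on_lines_Int
        cofinite_on_lines_generic_realizations cofinite_on_lines_displacement
        generic_realizations_nonempty) auto
  then obtain p where p_H: "rig_rank d p H = r_d d H" and p_G: "rig_rank d p G = r_d d G"
    and p_ab: "rig_rank d p (insert {a, b} G) = r_d d (insert {a, b} G)"
    and p_a: "lin_indep (displacement d p a) (N - {a})"
    by (auto simp: generic_realizations_def)
  obtain S where S: "S \<subseteq> H" "rows_indep d p S" "card S = r_d d H"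
    using ex_rig_rank_basis[OF H(1), of d p] p_H by auto
  have S': "finite S" "\<forall>e\<in>S. v \<notin> e" using S(1) H finite_subset by auto
  have "\<not> in_lin_span (rig_row d p) G (rig_row d p {a, b})"
    using rig_rank_Suc_not_in_span[OF G(1)] p_G p_ab closed by simp
  then have "rows_indep d (p(v := (\<lambda>i. (p a i + p b i) / 2))) (S \<union> star v N)"
    using S(1) G(2) by (intro rows_indep_Un_star_midpoint[OF S'(1,2) S(2) N(1,2,4-6) p_a G(1)]) auto
  then have "card (S \<union> star v N) \<le> r_d d (H \<union> star v N)"
    using S(1) H(1) N(1) by (intro card_le_r_d) (auto simp: star_def)
  then show ?thesis using card_Un_star[OF S'(1) N(1,2) S'(2)] S(3) N(3) by simp
qed

section \<open>One vertex in a fixed ordering\<close>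

lemma graph_finite_edges:
  assumes "graph V E"
  shows "finite E"
proof -
  have "E \<subseteq> Pow V"
  proof
    fix e assume "e \<in> E"
    then obtain x y where "e = {x, y}" and "x \<in> V" and "y \<in> V"
      using assms unfolding graph_def by blast
    then show "e \<in> Pow V" by simp
  qed
  moreover have "finite V" using assms by (simp add: graph_def)
  ultimately show ?thesis by (simp add: finite_subset)
qed

lemma graph_edge_finite:
  assumes "graph V E" and "e \<in> E"
  shows "finite e"
proof -
  obtain x y where "e = {x, y}" using assms unfolding graph_def by blast
  then show ?thesis by simp
qed

lemma graph_edge_in_vertices:
  assumes "graph V E" and "{u, w} \<in> E"
  shows "u \<in> V"
proof -
  obtain x y where "{u, w} = {x, y}" and "x \<in> V" and "y \<in> V"
    using assms unfolding graph_def by blast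
  moreover from this(1) have "u \<in> {x, y}" by (metis insertI1)
  ultimately show ?thesis by blast
qed

lemma graph_edge_neq:
  assumes "graph V E" and "{u, w} \<in> E"
  shows "u \<noteq> w"
proof
  assume "u = w"
  obtain x y where "{u, w} = {x, y}" and "x \<noteq> y"
    using assms(1,2) unfolding graph_def by blast
  moreover have "x \<in> {u}" and "y \<in> {u}" using calculation(1) \<open>u = w\<close> by blast+
  ultimately show False by simp
qed

lemma ex_non_edge_among_neighbours:
  assumes "graph V E" and "v \<in> V" and "N \<subseteq> {u. {u, v} \<in> E}" and "finite N"
    and "\<not> contains_clique V E (card N + 1)"
  shows "\<exists>a\<in>N. \<exists>b\<in>N. a \<noteq> b \<and> {a, b} \<notin> E"
proof (rule ccontr)
  assume "\<not> ?thesis"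
  then have clique: "{a, b} \<in> E" if "a \<in> N" "b \<in> N" "a \<noteq> b" for a b
    using that by blast
  have edge: "{u, v} \<in> E" if "u \<in> N" for u using assms(3) that by blast
  have "v \<notin> N" using edge graph_edge_neq[OF assms(1)] by blast
  have "insert v N \<subseteq> V" using assms(2) edge graph_edge_in_vertices[OF assms(1)] by blast
  moreover have "card (insert v N) = card N + 1" using \<open>v \<notin> N\<close> assms(4) by simp
  moreover have "{x, y} \<in> E" if "x \<in> insert v N" "y \<in> insert v N" "x \<noteq> y" for x y
  proof -
    have "{v, u} \<in> E" if "u \<in> N" for u using edge[OF that] by (metis insert_commute)
    then show ?thesis using that clique edge by auto
  qed
  ultimately show False using assms(5) unfolding contains_clique_def by blast
qed

lemma edges_at_before_eq_star:
  "edges_at_before E v \<pi> = star v {u. {u, v} \<in> E \<and> precedes \<pi> u v}"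
proof (intro equalityI subsetI)
  fix e assume "e \<in> edges_at_before E v \<pi>"
  then obtain u where "{v, u} \<in> E" and "e = {v, u}" and "precedes \<pi> u v"
    by (auto simp: edges_at_before_def)
  then show "e \<in> star v {u. {u, v} \<in> E \<and> precedes \<pi> u v}"
    by (auto simp: star_def insert_commute)
next
  fix e assume "e \<in> star v {u. {u, v} \<in> E \<and> precedes \<pi> u v}"
  then obtain u where "{u, v} \<in> E" and "precedes \<pi> u v" and "e = {v, u}"
    by (auto simp: star_def)
  then show "e \<in> edges_at_before E v \<pi>"
    by (auto simp: edges_at_before_def insert_commute)
qed

lemma closed_neighbourhood_subset:
  assumes "graph V E" and "v \<in> V"
  shows "insert v {u. {u, v} \<in> E} \<subseteq> V"
  using assms graph_edge_in_vertices[OF assms(1)] by blast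

lemma card_closed_neighbourhood:
  assumes "graph V E" and "v \<in> V"
  shows "card (insert v {u. {u, v} \<in> E}) = degree E v + 1"
proof -
  have "finite {u. {u, v} \<in> E}"
    using closed_neighbourhood_subset[OF assms] assms(1) finite_subset by (auto simp: graph_def)
  moreover have "v \<notin> {u. {u, v} \<in> E}" using graph_edge_neq[OF assms(1), of v v] by auto
  ultimately show ?thesis by (simp add: Defs.degree_def)
qed

lemma rc_star_pi_ge_min:
  assumes "graph V E" and "v \<in> V" and "R_closed d V E" and "\<not> contains_clique V E (d + 2)"
  shows "int (min (card {u. {u, v} \<in> E \<and> precedes \<pi> u v}) (d + 1)) \<le> rc_star_pi d E v \<pi>"
proof -
  define N where "N = {u. {u, v} \<in> E \<and> precedes \<pi> u v}"
  define H where "H = E - edges_at E v"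
  have E: "finite E" "\<forall>e\<in>E. finite e"
    using assms(1) graph_finite_edges graph_edge_finite by blast+
  have H: "finite H" "\<forall>e\<in>H. finite e \<and> v \<notin> e" "H \<subseteq> E"
    using E by (auto simp: H_def edges_at_def)
  have "N \<subseteq> V" using assms(1) graph_edge_in_vertices by (auto simp: N_def)
  then have "finite N" using assms(1) finite_subset by (auto simp: graph_def)
  have "v \<notin> N" using graph_edge_neq[OF assms(1), of v v] by (auto simp: N_def)
  have "edges_at_before E v \<pi> = star v N"
    unfolding N_def by (rule edges_at_before_eq_star)
  then have rc: "rc_star_pi d E v \<pi> = int (r_d d (H \<union> star v N)) - int (r_d d H)"
    by (simp add: rc_star_pi_def H_def)
  show ?thesis
  proof (cases "card N \<le> d")
    case True
    then show ?thesis
      using r_d_zero_extension[OF H(1,2) \<open>finite N\<close> \<open>v \<notin> N\<close> True] by (simp add: rc N_def[symmetric])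
  next
    case False
    then obtain N' where N': "N' \<subseteq> N" "card N' = d + 1"
      using obtain_subset_with_card_n[of "d + 1" N] by auto
    have "finite N'" "v \<notin> N'" using N'(1) \<open>finite N\<close> \<open>v \<notin> N\<close> finite_subset by auto
    have "\<not> contains_clique V E (card N' + 1)" using assms(4) N'(2) by simp
    then obtain a b where ab: "a \<in> N'" "b \<in> N'" "a \<noteq> b" "{a, b} \<notin> E"
      using ex_non_edge_among_neighbours[OF assms(1,2) _ \<open>finite N'\<close>] N'(1)
      by (auto simp: N_def)
    have "a \<in> V" "b \<in> V" using ab(1,2) N'(1) \<open>N \<subseteq> V\<close> by auto
    then have "r_d d (insert {a, b} E) = r_d d E + 1"
      using assms(3) ab(3,4) unfolding R_closed_def by blast
    then have "r_d d H + (d + 1) \<le> r_d d (H \<union> star v N')"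
      by (intro r_d_one_extension[OF H(1,2) \<open>finite N'\<close> \<open>v \<notin> N'\<close> N'(2) ab(1-3) E(1) H(3) E(2)])
    also have "\<dots> \<le> r_d d (H \<union> star v N)"
      using N'(1) H(1) \<open>finite N\<close> by (intro r_d_mono) (auto simp: star_def)
    finally show ?thesis using False by (simp add: rc N_def[symmetric])
  qed
qed

section \<open>Uniformly random orderings\<close>

definition rank_in :: "'a set \<Rightarrow> 'a list \<Rightarrow> 'a \<Rightarrow> nat" where
  "rank_in W \<pi> w = card {u\<in>W. precedes \<pi> u w}"

lemma precedes_irrefl:
  assumes "distinct \<pi>"
  shows "\<not> precedes \<pi> x x"
proof
  assume "precedes \<pi> x x"
  then obtain i j where "i < j" "j < length \<pi>" "\<pi> ! i = x" "\<pi> ! j = x"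
    unfolding precedes_def by blast
  then show False using nth_eq_iff_index_eq[OF assms, of i j] by simp
qed

lemma rank_in_closed_neighbourhood:
  assumes "distinct \<pi>"
  shows "rank_in (insert v {u. {u, v} \<in> E}) \<pi> v = card {u. {u, v} \<in> E \<and> precedes \<pi> u v}"
proof -
  have "\<not> precedes \<pi> v v" using assms by (rule precedes_irrefl)
  then have "{u \<in> insert v {u. {u, v} \<in> E}. precedes \<pi> u v} = {u. {u, v} \<in> E \<and> precedes \<pi> u v}"
    by auto
  then show ?thesis by (simp add: rank_in_def)
qed

lemma precedes_map:
  assumes "inj f"
  shows "precedes (map f \<pi>) (f x) (f y) \<longleftrightarrow> precedes \<pi> x y"
proof -
  have nth: "map f \<pi> ! i = f x \<longleftrightarrow> \<pi> ! i = x" if "i < length \<pi>" for i x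
    using that assms by (simp add: inj_eq)
  show ?thesis unfolding precedes_def
  proof
    assume "\<exists>i j. i < j \<and> j < length (map f \<pi>) \<and> map f \<pi> ! i = f x \<and> map f \<pi> ! j = f y"
    then obtain i j where "i < j" "j < length \<pi>" "map f \<pi> ! i = f x" "map f \<pi> ! j = f y"
      by auto
    moreover have "\<pi> ! i = x" "\<pi> ! j = y"
      using calculation nth[of i x] nth[of j y] by simp_all
    ultimately show "\<exists>i j. i < j \<and> j < length \<pi> \<and> \<pi> ! i = x \<and> \<pi> ! j = y"
      by blast
  next
    assume "\<exists>i j. i < j \<and> j < length \<pi> \<and> \<pi> ! i = x \<and> \<pi> ! j = y"
    then obtain i j where ij: "i < j" "j < length \<pi>" "\<pi> ! i = x" "\<pi> ! j = y" by blast
    then have "map f \<pi> ! i = f x" "map f \<pi> ! j = f y" by simp_all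
    with ij(1,2) show "\<exists>i j. i < j \<and> j < length (map f \<pi>) \<and> map f \<pi> ! i = f x \<and> map f \<pi> ! j = f y"
      by (metis length_map)
  qed
qed

lemma rank_in_map:
  assumes "inj f"
  shows "rank_in (f ` W) (map f \<pi>) (f w) = rank_in W \<pi> w"
proof -
  have "{u \<in> f ` W. precedes (map f \<pi>) u (f w)} = f ` {u \<in> W. precedes \<pi> u w}"
    using precedes_map[OF assms] by auto
  then show ?thesis
    unfolding rank_in_def using assms by (simp add: card_image inj_on_subset)
qed

lemma sum_permutations_rank_in_swap:
  assumes "v \<in> W" and "w \<in> W" and "W \<subseteq> V"
  shows "(\<Sum>\<pi>\<in>permutations_of_set V. g (rank_in W \<pi> v))
       = (\<Sum>\<pi>\<in>permutations_of_set V. g (rank_in W \<pi> w))"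
proof -
  let ?\<sigma> = "Transposition.transpose v w"
  have "?\<sigma> permutes V" using assms by (auto intro: permutes_swap_id)
  then have "bij_betw (map ?\<sigma>) (permutations_of_set V) (permutations_of_set V)"
    using inj_on_subset[OF inj_mapI[OF inj_transpose]]
    by (auto simp: bij_betw_def permutations_of_set_image_permutes)
  moreover have "rank_in W (map ?\<sigma> \<pi>) w = rank_in W \<pi> v" for \<pi>
    using rank_in_map[OF inj_transpose, of v w W \<pi> v] assms(1,2) by simp
  ultimately show ?thesis
    using sum.reindex_bij_betw[of "map ?\<sigma>" "permutations_of_set V" "permutations_of_set V"
        "\<lambda>\<pi>. g (rank_in W \<pi> w)"]
    by simp
qed

lemma bij_betw_card_less:
  fixes f :: "'a \<Rightarrow> nat"
  assumes "finite W" and "inj_on f W"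
  shows "bij_betw (\<lambda>w. card {u\<in>W. f u < f w}) W {..<card W}"
proof -
  let ?r = "\<lambda>w. card {u\<in>W. f u < f w}"
  have less: "?r w1 < ?r w2" if "w1 \<in> W" "w2 \<in> W" "f w1 < f w2" for w1 w2
    using that assms(1) by (intro psubset_card_mono) auto
  have "inj_on ?r W"
  proof (rule inj_onI)
    fix x y assume xy: "x \<in> W" "y \<in> W" "?r x = ?r y"
    show "x = y"
    proof (rule ccontr)
      assume "x \<noteq> y"
      then have "f x \<noteq> f y" using assms(2) xy(1,2) by (auto dest: inj_onD)
      then have "f x < f y \<or> f y < f x" by arith
      then show False using less[OF xy(1,2)] less[OF xy(2,1)] xy(3) by auto
    qed
  qed
  moreover have "?r ` W \<subseteq> {..<card W}"
  proof
    fix x assume "x \<in> ?r ` W"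
    then obtain w where "w \<in> W" and "x = ?r w" by blast
    then have "{u\<in>W. f u < f w} \<subset> W" by auto
    then show "x \<in> {..<card W}" using \<open>x = ?r w\<close> assms(1) by (simp add: psubset_card_mono)
  qed
  ultimately have "?r ` W = {..<card W}"
    by (intro card_subset_eq) (auto simp: card_image)
  with \<open>inj_on ?r W\<close> show ?thesis by (simp add: bij_betw_def)
qed

lemma precedes_iff_less_position:
  assumes "distinct \<pi>" and "u \<in> set \<pi>" and "w \<in> set \<pi>"
  shows "precedes \<pi> u w \<longleftrightarrow>
    inv_into {..<length \<pi>} ((!) \<pi>) u < inv_into {..<length \<pi>} ((!) \<pi>) w"
proof -
  define pos where "pos = inv_into {..<length \<pi>} ((!) \<pi>)"
  have image: "(!) \<pi> ` {..<length \<pi>} = set \<pi>" by (auto simp: set_conv_nth)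
  have pos: "pos x < length \<pi>" "\<pi> ! pos x = x" if "x \<in> set \<pi>" for x
    using that image inv_into_into[of x "(!) \<pi>" "{..<length \<pi>}"] f_inv_into_f[of x "(!) \<pi>"]
    by (auto simp: pos_def)
  have "precedes \<pi> u w \<longleftrightarrow> pos u < pos w"
  proof
    assume "precedes \<pi> u w"
    then obtain i j where ij: "i < j" "j < length \<pi>" "\<pi> ! i = u" "\<pi> ! j = w"
      unfolding precedes_def by blast
    have "pos u = i"
      using nth_eq_iff_index_eq[OF assms(1) pos(1)[OF assms(2)], of i] pos(2)[OF assms(2)] ij
      by simp
    moreover have "pos w = j"
      using nth_eq_iff_index_eq[OF assms(1) pos(1)[OF assms(3)], of j] pos(2)[OF assms(3)] ij
      by simp
    ultimately show "pos u < pos w" using ij(1) by simp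
  next
    assume "pos u < pos w"
    then show "precedes \<pi> u w" unfolding precedes_def using pos assms(2,3) by blast
  qed
  then show ?thesis by (simp add: pos_def)
qed

lemma sum_rank_in:
  assumes "finite W" and "W \<subseteq> V" and "\<pi> \<in> permutations_of_set V"
  shows "(\<Sum>w\<in>W. g (rank_in W \<pi> w)) = (\<Sum>j<card W. g j)"
proof -
  define pos where "pos = inv_into {..<length \<pi>} ((!) \<pi>)"
  have \<pi>: "distinct \<pi>" "set \<pi> = V" using assms(3) by (auto simp: permutations_of_set_def)
  have "inj_on pos (set \<pi>)"
    unfolding pos_def by (rule inj_on_inv_into) (auto simp: set_conv_nth)
  then have inj: "inj_on pos W" using assms(2) \<pi>(2) inj_on_subset by blast
  have "rank_in W \<pi> w = card {u\<in>W. pos u < pos w}" if "w \<in> W" for w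
    unfolding rank_in_def pos_def
    using precedes_iff_less_position[OF \<pi>(1)] that assms(2) \<pi>(2)
    by (intro arg_cong[where f = card]) blast
  then show ?thesis
    using sum.reindex_bij_betw[OF bij_betw_card_less[OF assms(1) inj], of g] by simp
qed

lemma mean_rank_in:
  fixes g :: "nat \<Rightarrow> real"
  assumes "finite V" and "W \<subseteq> V" and "v \<in> W"
  shows "(\<Sum>\<pi>\<in>permutations_of_set V. g (rank_in W \<pi> v)) / real (card (permutations_of_set V))
       = (\<Sum>j<card W. g j) / real (card W)"
proof -
  let ?P = "permutations_of_set V"
  have "finite W" using assms(1,2) finite_subset by blast
  have "real (card W) * (\<Sum>\<pi>\<in>?P. g (rank_in W \<pi> v)) = (\<Sum>w\<in>W. \<Sum>\<pi>\<in>?P. g (rank_in W \<pi> v))"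
    by simp
  also have "\<dots> = (\<Sum>w\<in>W. \<Sum>\<pi>\<in>?P. g (rank_in W \<pi> w))"
    by (rule sum.cong[OF refl]) (rule sum_permutations_rank_in_swap[OF assms(3) _ assms(2)])
  also have "\<dots> = (\<Sum>\<pi>\<in>?P. \<Sum>w\<in>W. g (rank_in W \<pi> w))" by (rule sum.swap)
  also have "\<dots> = (\<Sum>\<pi>\<in>?P. \<Sum>j<card W. g j)"
    by (rule sum.cong[OF refl]) (rule sum_rank_in[OF \<open>finite W\<close> assms(2)])
  also have "\<dots> = real (card ?P) * (\<Sum>j<card W. g j)" by simp
  finally have "real (card W) * (\<Sum>\<pi>\<in>?P. g (rank_in W \<pi> v)) = real (card ?P) * (\<Sum>j<card W. g j)" .
  moreover have "card W > 0" "card ?P > 0" using \<open>finite W\<close> assms(1,3) by (auto simp: card_gt_0_iff)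
  ultimately show ?thesis using assms(1) by (simp add: field_simps)
qed

lemma sum_atMost_id_choose: "(\<Sum>j\<le>m. j) + (m + 1 choose 2) = m * (m + 1)" for m :: nat
  by (induction m) (simp_all add: numeral_2_eq_2)
lemma sum_min_atMost:
  fixes m k :: nat
  assumes "m \<le> k"
  shows "(\<Sum>j\<le>k. min j m) + (m + 1 choose 2) = m * (k + 1)"
  using assms
proof (induction k rule: nat_induct_at_least)
  case base
  have "(\<Sum>j\<le>m. min j m) = (\<Sum>j\<le>m. j)" by (intro sum.cong) auto
  then show ?case using sum_atMost_id_choose[of m] by simp
next
  case (Suc k)
  then show ?case by simp
qed
lemma mean_min_lessThan:
  fixes d k :: nat
  assumes "d + 1 \<le> k"
  shows "(\<Sum>j<k + 1. real (min j (d + 1))) / real (k + 1)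
    = real (d + 1) - 1 / real (k + 1) * real ((d + 2) choose 2)"
proof -
  have "(\<Sum>j\<le>k. min j (d + 1)) + (d + 2 choose 2) = (d + 1) * (k + 1)"
    using sum_min_atMost[OF assms] by (simp add: ac_simps)
  then have "real (\<Sum>j\<le>k. min j (d + 1)) + real (d + 2 choose 2) = real (d + 1) * real (k + 1)"
    by (metis of_nat_add of_nat_mult)
  moreover have "(\<Sum>j<k + 1. real (min j (d + 1))) = real (\<Sum>j\<le>k. min j (d + 1))"
    by (simp add: lessThan_Suc_atMost)
  ultimately have "(\<Sum>j<k + 1. real (min j (d + 1)))
      = real (d + 1) * real (k + 1) - real (d + 2 choose 2)"
    by linarith
  then show ?thesis by (simp add: field_simps)
qed
theorem lemma3p9:
  fixes V :: "'a set" and E :: "'a set set" and v :: 'a and d k :: nat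
  assumes "graph V E" and "v \<in> V" and "d \<ge> 1"
    and "R_closed d V E"
    and "degree E v = k" and "k \<ge> d + 1"
    and "\<not> contains_clique V E (d + 2)"
  shows "rc_star d V E v \<ge> real (d + 1) - (1 / real (k + 1)) * real ((d + 2) choose 2)"
proof -
  define W where "W = insert v {u. {u, v} \<in> E}"
  define P where "P = permutations_of_set V"
  have "finite V" using assms(1) by (simp add: graph_def)
  have W: "W \<subseteq> V" "v \<in> W" "card W = k + 1"
    using closed_neighbourhood_subset[OF assms(1,2)] card_closed_neighbourhood[OF assms(1,2)]
      assms(5)
    by (auto simp: W_def)
  have rc_ge: "real (min (rank_in W \<pi> v) (d + 1)) \<le> real_of_int (rc_star_pi d E v \<pi>)"
    if "\<pi> \<in> P" for \<pi>
    using rc_star_pi_ge_min[OF assms(1,2,4,7), of \<pi>] rank_in_closed_neighbourhood[of \<pi> v E] that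
    by (simp add: W_def P_def permutations_of_set_def)
  have "real (d + 1) - 1 / real (k + 1) * real ((d + 2) choose 2)
      = (\<Sum>j<card W. real (min j (d + 1))) / real (card W)"
    unfolding W(3) by (rule mean_min_lessThan[OF assms(6), symmetric])
  also have "\<dots> = (\<Sum>\<pi>\<in>P. real (min (rank_in W \<pi> v) (d + 1))) / real (card P)"
    unfolding P_def by (rule mean_rank_in[OF \<open>finite V\<close> W(1,2), symmetric])
  also have "\<dots> \<le> (\<Sum>\<pi>\<in>P. real_of_int (rc_star_pi d E v \<pi>)) / real (card P)"
    using rc_ge by (intro divide_right_mono sum_mono) simp_all
  also have "\<dots> = rc_star d V E v" by (simp add: rc_star_def P_def)
  finally show ?thesis .
qed

end
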